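(* Let $f:\{0,1\}^n\to\{0,1\}$ be symmetric, $c\in\mathbb{R}^n_{\ge0}$ any cost vector, $\varepsilon\in(0,0.5]$ and $\beta>0$. Then the online algorithm Warmup-IPRR$(f,\varepsilon)$ with unit investment $\beta$ is an $\varepsilon$-error algorithm with expected cost at most \[ \beta n+\mathrm{opt}^{\mathrm{avg}}_0(f,c)\cdot O\!\left(\log\frac1\varepsilon\right), \] where $O(\cdot)$ hides an absolute constant.
   Context: $f$ is symmetric if $f(x)=f(y)$ whenever $\sum_ix_i=\sum_iy_i$. Online priced query model: $f$ is given; input $x$ and costs $c$ unknown; investments $\theta$ start at $0$, each step one $\theta_i$ increases by $\beta$; $x_i$ is revealed once $\theta_i\ge c_i$; cost is $\|\theta\|_1$ at halting; expected cost is over uniform $x\in\{0,1\}^n$. An algorithm is $\varepsilon$-error if $\Pr_x[\text{output}\ne f(x)]\le\varepsilon$. $\mathrm{opt}^{\mathrm{avg}}_0(f,c)$ is the infimum of expected cost over all zero-error algorithms (offline ones know $c$ and pay $c_i$ per revealed $x_i$). $\mathrm{Inf}_i[g]=\Pr_x[g(x)\ne g(x^{\oplus i})]$; for a restriction $\pi$, $f_\pi$ is the restricted function; $\mathrm{bias}(g)=\min\{\Pr_x[g\ne0],\Pr_x[g\ne1]\}$. Warmup-IPRR$(f,\varepsilon)$: start with $\theta=0,\pi=\emptyset$; while $\mathrm{bias}(f_\pi)>\varepsilon$: pick $i^*\in\arg\max_i\mathrm{Inf}_i[f_\pi]/\theta_i$, increase $\theta_{i^*}$ by $\beta$, and if $x_{i^*}$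 is revealed as $b$ add $x_{i^*}\mapsto b$ to $\pi$; output $\mathbf{1}\{\mathbb{E}_x[f_\pi(x)]\ge1/2\}$. *)

theory Defs
  imports Complex_Main "HOL-Library.Extended_Real"
begin

text \<open>Inputs x in {0,1}^n are functions nat => bool that are False outside {0..<n}.\<close>
definition cube :: "nat \<Rightarrow> (nat \<Rightarrow> bool) set" where
  "cube n = {x. \<forall>i\<ge>n. \<not> x i}"

definition prob :: "nat \<Rightarrow> ((nat \<Rightarrow> bool) \<Rightarrow> bool) \<Rightarrow> real" where
  "prob n P = real (card {x \<in> cube n. P x}) / 2 ^ n"

definition expect :: "nat \<Rightarrow> ((nat \<Rightarrow> bool) \<Rightarrow> real) \<Rightarrow> real" where
  "expect n g = (\<Sum>x\<in>cube n. g x) / 2 ^ n"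

definition symmetric_fun :: "nat \<Rightarrow> ((nat \<Rightarrow> bool) \<Rightarrow> bool) \<Rightarrow> bool" where
  "symmetric_fun n f \<longleftrightarrow> (\<forall>x\<in>cube n. \<forall>y\<in>cube n.
      card {i. i < n \<and> x i} = card {i. i < n \<and> y i} \<longrightarrow> f x = f y)"

definition restrict_fun ::
  "((nat \<Rightarrow> bool) \<Rightarrow> bool) \<Rightarrow> (nat \<rightharpoonup> bool) \<Rightarrow> (nat \<Rightarrow> bool) \<Rightarrow> bool" where
  "restrict_fun f \<pi> x = f (\<lambda>i. case \<pi> i of Some b \<Rightarrow> b | None \<Rightarrow> x i)"

definition flip :: "nat \<Rightarrow> (nat \<Rightarrow> bool) \<Rightarrow> (nat \<Rightarrow> bool)" where
  "flip i x = x(i := \<not> x i)"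

definition influence :: "nat \<Rightarrow> ((nat \<Rightarrow> bool) \<Rightarrow> bool) \<Rightarrow> nat \<Rightarrow> real" where
  "influence n g i = prob n (\<lambda>x. g x \<noteq> g (flip i x))"

definition bias :: "nat \<Rightarrow> ((nat \<Rightarrow> bool) \<Rightarrow> bool) \<Rightarrow> real" where
  "bias n g = min (prob n (\<lambda>x. g x \<noteq> False)) (prob n (\<lambda>x. g x \<noteq> True))"

text \<open>Score Inf_i[f_pi] / theta_i, with the convention a/0 = +infinity for a > 0 and 0/0 = 0.\<close>
definition iprr_score ::
  "nat \<Rightarrow> ((nat \<Rightarrow> bool) \<Rightarrow> bool) \<Rightarrow> (nat \<Rightarrow> real) \<Rightarrow> (nat \<rightharpoonup> bool) \<Rightarrow> nat \<Rightarrow> ereal" where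
  "iprr_score n f \<theta> \<pi> i =
     (let a = influence n (restrict_fun f \<pi>) i in
      if \<theta> i = 0 then (if a > 0 then \<infinity> else 0) else ereal (a / \<theta> i))"

text \<open>A selection rule (tie-breaking) is any function of the algorithm's state (theta, pi)
  returning an index in argmax_i Inf_i[f_pi]/theta_i whenever the loop condition holds.\<close>
definition valid_selection ::
  "nat \<Rightarrow> ((nat \<Rightarrow> bool) \<Rightarrow> bool) \<Rightarrow> real \<Rightarrow> ((nat \<Rightarrow> real) \<Rightarrow> (nat \<rightharpoonup> bool) \<Rightarrow> nat) \<Rightarrow> bool" where
  "valid_selection n f \<epsilon> sel \<longleftrightarrow>
     (\<forall>\<theta> \<pi>. bias n (restrict_fun f \<pi>) > \<epsilon> \<longrightarrow>
        sel \<theta> \<pi> < n \<and> (\<forall>j<n. iprr_score n f \<theta> \<pi> j \<le> iprr_score n f \<theta> \<pi> (sel \<theta> \<pi>)))"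

definition iprr_step ::
  "(nat \<Rightarrow> real) \<Rightarrow> real \<Rightarrow> ((nat \<Rightarrow> real) \<Rightarrow> (nat \<rightharpoonup> bool) \<Rightarrow> nat) \<Rightarrow> (nat \<Rightarrow> bool) \<Rightarrow>
   (nat \<Rightarrow> real) \<times> (nat \<rightharpoonup> bool) \<Rightarrow> (nat \<Rightarrow> real) \<times> (nat \<rightharpoonup> bool)" where
  "iprr_step c \<beta> sel x s =
     (let \<theta> = fst s; \<pi> = snd s; i = sel \<theta> \<pi>; \<theta>' = \<theta>(i := \<theta> i + \<beta>) in
      (\<theta>', if c i \<le> \<theta>' i then \<pi>(i \<mapsto> x i) else \<pi>))"

definition iprr_state ::
  "(nat \<Rightarrow> real) \<Rightarrow> real \<Rightarrow> ((nat \<Rightarrow> real) \<Rightarrow> (nat \<rightharpoonup> bool) \<Rightarrow> nat) \<Rightarrow> (nat \<Rightarrow> bool) \<Rightarrow>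
   nat \<Rightarrow> (nat \<Rightarrow> real) \<times> (nat \<rightharpoonup> bool)" where
  "iprr_state c \<beta> sel x k = (iprr_step c \<beta> sel x ^^ k) (\<lambda>_. 0, Map.empty)"

definition iprr_stop where
  "iprr_stop n f \<epsilon> c \<beta> sel x k \<longleftrightarrow> bias n (restrict_fun f (snd (iprr_state c \<beta> sel x k))) \<le> \<epsilon>"

definition iprr_halts where
  "iprr_halts n f \<epsilon> c \<beta> sel x \<longleftrightarrow> (\<exists>k. iprr_stop n f \<epsilon> c \<beta> sel x k)"

definition iprr_time where
  "iprr_time n f \<epsilon> c \<beta> sel x = (LEAST k. iprr_stop n f \<epsilon> c \<beta> sel x k)"

definition iprr_final where
  "iprr_final n f \<epsilon> c \<beta> sel x = iprr_state c \<beta> sel x (iprr_time n f \<epsilon> c \<beta> sel x)"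

definition iprr_output where
  "iprr_output n f \<epsilon> c \<beta> sel x \<longleftrightarrow>
     expect n (\<lambda>y. if restrict_fun f (snd (iprr_final n f \<epsilon> c \<beta> sel x)) y then 1 else 0) \<ge> 1/2"

definition iprr_cost where
  "iprr_cost n f \<epsilon> c \<beta> sel x = (\<Sum>i<n. fst (iprr_final n f \<epsilon> c \<beta> sel x) i)"

datatype dtree = Leaf bool | Query nat dtree dtree  \<comment> \<open>Query i t0 t1: go to t1 iff x i\<close>

fun dt_eval :: "dtree \<Rightarrow> (nat \<Rightarrow> bool) \<Rightarrow> bool" where
  "dt_eval (Leaf b) x = b"
| "dt_eval (Query i t0 t1) x = (if x i then dt_eval t1 x else dt_eval t0 x)"

fun dt_queried :: "dtree \<Rightarrow> (nat \<Rightarrow> bool) \<Rightarrow> nat set" where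
  "dt_queried (Leaf b) x = {}"
| "dt_queried (Query i t0 t1) x = insert i (if x i then dt_queried t1 x else dt_queried t0 x)"

fun dt_vars :: "dtree \<Rightarrow> nat set" where
  "dt_vars (Leaf b) = {}"
| "dt_vars (Query i t0 t1) = insert i (dt_vars t0 \<union> dt_vars t1)"

definition opt_avg0 :: "nat \<Rightarrow> ((nat \<Rightarrow> bool) \<Rightarrow> bool) \<Rightarrow> (nat \<Rightarrow> real) \<Rightarrow> real" where
  "opt_avg0 n f c = Inf {expect n (\<lambda>x. \<Sum>i\<in>dt_queried t x. c i) | t.
       dt_vars t \<subseteq> {..<n} \<and> (\<forall>x\<in>cube n. dt_eval t x = f x)}"

end

theory Submission
  imports Defs "HOL-Combinatorics.Transposition"
begin

text \<open>
  As f is symmetric, all free coordinates of a restriction f_\<pi> have the same influence and the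
  fixed ones have none, so Warmup-IPRR always invests in a free coordinate of least investment,
  and its run depends on the input only through the values it reveals.

  Error: inputs that agree on the finally revealed coordinates have the same run, so averaging
  over the subcube of each final restriction f_\<pi> shows that the majority answer errs with
  probability E[bias(f_\<pi>)] \<le> \<epsilon>.

  Cost: the coordinates Q that a zero-error decision tree reads on x certify f(x).  If F is the
  set of free coordinates and bias(f_\<pi>) > \<epsilon>, then f_\<pi>(z) = f(x) whenever the weight of z on F
  lies between |Q \<inter> F| and |F| - |Q \<inter> F|, because some input agreeing with x on Q and on the
  fixed coordinates has the same total weight as the completion of z; a binomial tail bound then
  gives |F| \<le> 20 ln(1/\<epsilon>) |Q \<inter> F|.  The steps at investment level l \<ge> 1 choose distinct
  coordinates that are free when level l is first reached, and every j \<in> Q still free then has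
  c_j > \<beta> l.  Summing over the levels, each j \<in> Q is charged at most c_j / \<beta> times, so the
  number T of steps satisfies \<beta> T \<le> \<beta> n + 20 ln(1/\<epsilon>) (\<Sum>j\<in>Q. c_j); averaging over x
  gives the theorem with C = 20.
\<close>

section \<open>Uniform distribution on the cube\<close>

lemma mem_cube_iff: "x \<in> cube n \<longleftrightarrow> (\<forall>i. x i \<longrightarrow> i < n)"
  unfolding cube_def using not_le by blast

lemma bij_betw_cube_Pow: "bij_betw (\<lambda>x. {i. x i}) (cube n) (Pow {..<n})"
  by (rule bij_betw_byWitness[where f' = "\<lambda>S i. i \<in> S"]) (auto simp: mem_cube_iff)

lemma finite_cube [simp]: "finite (cube n)"
  using bij_betw_finite[OF bij_betw_cube_Pow] by simp

lemma card_cube: "card (cube n) = 2 ^ n"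
  using bij_betw_same_card[OF bij_betw_cube_Pow] by (simp add: card_Pow)

lemma prob_eq_expect: "prob n P = expect n (\<lambda>x. if P x then 1 else 0)"
  by (simp add: prob_def expect_def sum.If_cases Int_def)

lemma expect_mono:
  "(\<And>x. x \<in> cube n \<Longrightarrow> g x \<le> h x) \<Longrightarrow> expect n g \<le> expect n h"
  unfolding expect_def by (intro divide_right_mono sum_mono) auto

lemma expect_const [simp]: "expect n (\<lambda>_. a) = a"
  by (simp add: expect_def card_cube)

lemma expect_add: "expect n (\<lambda>x. g x + h x) = expect n g + expect n h"
  by (simp add: expect_def sum.distrib add_divide_distrib)

lemma expect_cmult: "expect n (\<lambda>x. a * g x) = a * expect n g"
  by (simp add: expect_def sum_distrib_left)

lemma prob_mono:
  "(\<And>x. x \<in> cube n \<Longrightarrow> P x \<Longrightarrow> Q x) \<Longrightarrow> prob n P \<le> prob n Q"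
  unfolding prob_eq_expect by (intro expect_mono) auto

lemma prob_cong:
  assumes "\<And>x. x \<in> cube n \<Longrightarrow> P x = Q x"
  shows "prob n P = prob n Q"
proof -
  have "{x \<in> cube n. P x} = {x \<in> cube n. Q x}"
    using assms by auto
  then show ?thesis
    by (simp add: prob_def)
qed

lemma prob_eq_0_iff: "prob n P = 0 \<longleftrightarrow> (\<forall>x\<in>cube n. \<not> P x)"
  by (auto simp: prob_def card_eq_0_iff)

lemma prob_compl: "prob n (\<lambda>x. \<not> P x) = 1 - prob n P"
proof -
  have "(\<lambda>x. (if \<not> P x then 1 else 0) + (if P x then 1 else 0)) = (\<lambda>_. 1 :: real)"
    by auto
  then show ?thesis
    using expect_add[of n "\<lambda>x. if \<not> P x then 1 else 0" "\<lambda>x. if P x then 1 else 0"]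
    unfolding prob_eq_expect by simp
qed

lemma bias_le_prob: "bias n g \<le> prob n (\<lambda>x. g x \<noteq> v)"
  by (cases v) (auto simp: bias_def)

definition majority :: "nat \<Rightarrow> ((nat \<Rightarrow> bool) \<Rightarrow> bool) \<Rightarrow> bool" where
  "majority n g \<longleftrightarrow> 1/2 \<le> expect n (\<lambda>y. if g y then 1 else 0)"

lemma prob_ne_majority: "prob n (\<lambda>z. g z \<noteq> majority n g) = bias n g"
proof -
  have "majority n g \<longleftrightarrow> 1/2 \<le> prob n g"
    by (simp add: majority_def prob_eq_expect)
  moreover have "bias n g = min (prob n g) (1 - prob n g)"
    using prob_compl[of n g] by (simp add: bias_def)
  ultimately show ?thesis
    using prob_compl[of n g] by (cases "majority n g") auto
qed

section \<open>Restrictions of symmetric functions\<close>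

definition override :: "(nat \<rightharpoonup> bool) \<Rightarrow> (nat \<Rightarrow> bool) \<Rightarrow> nat \<Rightarrow> bool" where
  "override \<pi> z = (\<lambda>i. case \<pi> i of Some b \<Rightarrow> b | None \<Rightarrow> z i)"

definition free_coords :: "nat \<Rightarrow> (nat \<rightharpoonup> bool) \<Rightarrow> nat set" where
  "free_coords n \<pi> = {i. i < n \<and> \<pi> i = None}"

lemma restrict_fun_override: "restrict_fun f \<pi> z = f (override \<pi> z)"
  by (simp add: restrict_fun_def override_def)

lemma override_in_cube:
  "z \<in> cube n \<Longrightarrow> \<forall>i. \<pi> i \<noteq> None \<longrightarrow> i < n \<Longrightarrow> override \<pi> z \<in> cube n"
  by (auto simp: mem_cube_iff override_def split: option.splits)

lemma flip_in_cube: "x \<in> cube n \<Longrightarrow> i < n \<Longrightarrow> flip i x \<in> cube n"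
  by (auto simp: mem_cube_iff flip_def)

lemma transpose_in_cube:
  "x \<in> cube n \<Longrightarrow> i < n \<Longrightarrow> j < n \<Longrightarrow> x \<circ> transpose i j \<in> cube n"
  by (auto simp: mem_cube_iff transpose_def)

lemma prob_transpose:
  assumes "i < n" "j < n"
  shows "prob n (\<lambda>y. P (y \<circ> transpose i j)) = prob n P"
proof -
  have "{y \<in> cube n. P (y \<circ> transpose i j)} = (\<lambda>y. y \<circ> transpose i j) ` {y \<in> cube n. P y}"
    using assms by (force simp: comp_assoc intro: transpose_in_cube
        image_eqI[where x = "_ \<circ> transpose i j"])
  moreover have "inj (\<lambda>y :: nat \<Rightarrow> bool. y \<circ> transpose i j)"
    by (rule injI) (metis comp_assoc comp_id transpose_comp_involutory)
  ultimately show ?thesis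
    unfolding prob_def by (simp add: card_image inj_on_subset)
qed

lemma symmetric_fun_transpose:
  assumes "symmetric_fun n f" "i < n" "j < n" "z \<in> cube n"
  shows "f (z \<circ> transpose i j) = f z"
proof -
  have "{k. k < n \<and> (z \<circ> transpose i j) k} = transpose i j ` {k. k < n \<and> z k}"
    using assms(2,3) by (auto simp: in_transpose_image_iff transpose_def)
  then have "card {k. k < n \<and> (z \<circ> transpose i j) k} = card {k. k < n \<and> z k}"
    by (simp add: card_image inj_on_subset)
  then show ?thesis
    using assms transpose_in_cube unfolding symmetric_fun_def by blast
qed

lemma influence_free_eq:
  assumes sym: "symmetric_fun n f" and dom: "\<forall>k. \<pi> k \<noteq> None \<longrightarrow> k < n"
    and i: "i \<in> free_coords n \<pi>" and j: "j \<in> free_coords n \<pi>"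
  shows "influence n (restrict_fun f \<pi>) i = influence n (restrict_fun f \<pi>) j"
proof -
  define g where "g = restrict_fun f \<pi>"
  define \<tau> where "\<tau> = transpose i j"
  have ij: "i < n" "j < n" "\<pi> i = None" "\<pi> j = None"
    using i j by (auto simp: free_coords_def)
  have g_\<tau>: "g (y \<circ> \<tau>) = g y" if "y \<in> cube n" for y
  proof -
    have "override \<pi> (y \<circ> \<tau>) = override \<pi> y \<circ> \<tau>"
      using ij by (auto simp: override_def \<tau>_def transpose_def fun_eq_iff split: option.splits)
    then show ?thesis
      using symmetric_fun_transpose[OF sym ij(1,2) override_in_cube[OF that dom]]
      by (simp add: g_def restrict_fun_override \<tau>_def)
  qed
  have flip_\<tau>: "flip i (y \<circ> \<tau>) = flip j y \<circ> \<tau>" for y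
    by (auto simp: flip_def \<tau>_def transpose_def fun_eq_iff)
  have "influence n g i = prob n (\<lambda>y. g (y \<circ> \<tau>) \<noteq> g (flip i (y \<circ> \<tau>)))"
    unfolding influence_def \<tau>_def
    by (rule prob_transpose[OF ij(1,2), symmetric])
  also have "\<dots> = influence n g j"
    unfolding influence_def flip_\<tau>
    by (rule prob_cong) (simp add: g_\<tau> flip_in_cube ij(2))
  finally show ?thesis
    unfolding g_def .
qed

lemma influence_fixed:
  assumes "\<pi> i \<noteq> None"
  shows "influence n (restrict_fun f \<pi>) i = 0"
proof -
  have "override \<pi> (flip i y) = override \<pi> y" for y
    using assms by (auto simp: override_def flip_def fun_eq_iff split: option.splits)
  then show ?thesis
    unfolding influence_def restrict_fun_override by (simp add: prob_eq_0_iff)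
qed

lemma constant_if_no_influence:
  assumes "\<And>j y. j < n \<Longrightarrow> y \<in> cube n \<Longrightarrow> g (flip j y) = g y" and "y \<in> cube n"
  shows "g y = g (\<lambda>_. False)"
proof -
  have "g (\<lambda>i. i \<in> S) = g (\<lambda>_. False)" if "S \<subseteq> {..<n}" for S
    using finite_subset[OF that finite_lessThan] that
  proof (induction S rule: finite_subset_induct')
    case (insert a S)
    have "(\<lambda>i. i \<in> insert a S) = flip a (\<lambda>i. i \<in> S)"
      using insert.hyps(4) by (auto simp: flip_def fun_eq_iff)
    moreover have "(\<lambda>i. i \<in> S) \<in> cube n"
      using insert.hyps(3) by (auto simp: mem_cube_iff)
    ultimately show ?case
      using assms(1) insert.hyps(2) insert.IH by simp
  qed simp
  moreover have "y = (\<lambda>i. i \<in> {i. y i})" "{i. y i} \<subseteq> {..<n}"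
    using assms(2) by (auto simp: mem_cube_iff)
  ultimately show ?thesis
    by metis
qed

lemma influential_free_coord:
  assumes dom: "\<forall>k. \<pi> k \<noteq> None \<longrightarrow> k < n" and pos: "0 < bias n (restrict_fun f \<pi>)"
  shows "\<exists>j\<in>free_coords n \<pi>. 0 < influence n (restrict_fun f \<pi>) j"
proof (rule ccontr)
  define g where "g = restrict_fun f \<pi>"
  assume none: "\<not> ?thesis"
  have "influence n g j = 0" if "j < n" for j
  proof (cases "\<pi> j")
    case None
    then have "\<not> 0 < influence n g j"
      using none that by (auto simp: g_def free_coords_def)
    moreover have "0 \<le> influence n g j"
      by (simp add: influence_def prob_def)
    ultimately show ?thesis
      by linarith
  next
    case (Some b)
    then show ?thesis
      using influence_fixed by (simp add: g_def)
  qed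
  then have "g (flip j y) = g y" if "j < n" "y \<in> cube n" for j y
    using that unfolding influence_def prob_eq_0_iff by metis
  then have "g y = g (\<lambda>_. False)" if "y \<in> cube n" for y
    using that by (rule constant_if_no_influence)
  then have "prob n (\<lambda>y. g y \<noteq> g (\<lambda>_. False)) = 0"
    by (simp add: prob_eq_0_iff)
  then show False
    using bias_le_prob[of n g "g (\<lambda>_. False)"] pos by (simp add: g_def)
qed

text \<open>The two sides are the values of iprr_score for coordinates of influence a.\<close>

lemma reciprocal_score_le_iff:
  fixes a s t :: real
  assumes "0 < a" "0 \<le> s" "0 \<le> t"
  shows "(if t = 0 then \<infinity> else ereal (a / t)) \<le> (if s = 0 then \<infinity> else ereal (a / s))
    \<longleftrightarrow> s \<le> t"
proof (cases "s = 0"; cases "t = 0")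
  assume "s \<noteq> 0" "t \<noteq> 0"
  then show ?thesis
    using assms by (simp add: frac_le_eq divide_le_cancel field_simps)
qed (use assms in auto)

lemma valid_selection_min_free:
  assumes sym: "symmetric_fun n f" and vs: "valid_selection n f \<epsilon> sel" and "0 \<le> \<epsilon>"
    and dom: "\<forall>k. \<pi> k \<noteq> None \<longrightarrow> k < n" and \<theta>: "\<forall>i. 0 \<le> \<theta> i"
    and b: "\<epsilon> < bias n (restrict_fun f \<pi>)"
  shows "sel \<theta> \<pi> \<in> free_coords n \<pi>" "\<forall>j\<in>free_coords n \<pi>. \<theta> (sel \<theta> \<pi>) \<le> \<theta> j"
proof -
  define s where "s = sel \<theta> \<pi>"
  define score where "score = iprr_score n f \<theta> \<pi>"
  have s: "s < n" "\<forall>j<n. score j \<le> score s"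
    using vs b unfolding valid_selection_def s_def score_def by blast+
  obtain j0 where j0: "j0 \<in> free_coords n \<pi>" and a: "0 < influence n (restrict_fun f \<pi>) j0"
    using influential_free_coord[OF dom] b \<open>0 \<le> \<epsilon>\<close> by (meson le_less_trans)
  define a where "a = influence n (restrict_fun f \<pi>) j0"
  have score_free: "score j = (if \<theta> j = 0 then \<infinity> else ereal (a / \<theta> j))"
    if "j \<in> free_coords n \<pi>" for j
    using influence_free_eq[OF sym dom that j0] a by (simp add: score_def iprr_score_def a_def)
  have "\<pi> s = None"
  proof (rule ccontr)
    assume "\<pi> s \<noteq> None"
    then have "score s = 0"
      using influence_fixed[of \<pi> s n f] by (simp add: score_def iprr_score_def)
    moreover have "0 < score j0"
      using score_free[OF j0] a \<theta>[rule_format, of j0] by (simp add: a_def order.strict_iff_order)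
    moreover have "score j0 \<le> score s"
      using s(2) j0 by (simp add: free_coords_def)
    ultimately show False
      by simp
  qed
  then have free: "s \<in> free_coords n \<pi>"
    using s by (simp add: free_coords_def)
  have "\<theta> s \<le> \<theta> j" if "j \<in> free_coords n \<pi>" for j
  proof -
    have "score j \<le> score s"
      using s(2) that by (simp add: free_coords_def)
    then show ?thesis
      using score_free[OF that] score_free[OF free] reciprocal_score_le_iff[of a "\<theta> s" "\<theta> j"] a \<theta>
      by (simp add: a_def)
  qed
  with free show "sel \<theta> \<pi> \<in> free_coords n \<pi>" "\<forall>j\<in>free_coords n \<pi>. \<theta> (sel \<theta> \<pi>) \<le> \<theta> j"
    by (simp_all add: s_def)
qed

text \<open>Exchanging x and z outside the coordinates revealed on x is an involution of the pairs
  (x, z) that, by stability, does not change what is revealed on the first component.\<close>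

lemma expect_by_revealed:
  fixes P :: "(nat \<Rightarrow> bool) \<Rightarrow> nat \<rightharpoonup> bool"
  assumes cons: "\<And>x i b. x \<in> cube n \<Longrightarrow> P x i = Some b \<Longrightarrow> b = x i"
    and stable: "\<And>x y. x \<in> cube n \<Longrightarrow> y \<in> cube n \<Longrightarrow> (\<And>i. P x i \<noteq> None \<Longrightarrow> y i = x i) \<Longrightarrow> P y = P x"
  shows "expect n (\<lambda>x. H (P x) x) = expect n (\<lambda>x. expect n (\<lambda>z. H (P x) (override (P x) z)))"
proof -
  define C where "C = cube n"
  define \<phi> where "\<phi> p = (\<lambda>i. if P (fst p) i \<noteq> None then fst p i else snd p i,
                         \<lambda>i. if P (fst p) i \<noteq> None then snd p i else fst p i)" for p
  have \<phi>_cube: "\<phi> p \<in> C \<times> C" if "p \<in> C \<times> C" for p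
    using that by (auto simp: \<phi>_def C_def mem_cube_iff)
  have P_\<phi>: "P (fst (\<phi> p)) = P (fst p)" if "p \<in> C \<times> C" for p
  proof (rule stable)
    show "fst p \<in> cube n" "fst (\<phi> p) \<in> cube n"
      using that \<phi>_cube[OF that] by (auto simp: C_def)
    show "fst (\<phi> p) i = fst p i" if "P (fst p) i \<noteq> None" for i
      using that by (simp add: \<phi>_def)
  qed
  have "fst (\<phi> (x, z)) = override (P x) z" if "x \<in> C" for x z
    using cons[of x] that by (auto simp: \<phi>_def override_def C_def fun_eq_iff split: option.splits)
  then have "(\<Sum>x\<in>C. \<Sum>z\<in>C. H (P x) (override (P x) z)) = (\<Sum>p\<in>C \<times> C. H (P (fst (\<phi> p))) (fst (\<phi> p)))"
    using P_\<phi> by (simp add: sum.cartesian_product')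
  also have "\<dots> = (\<Sum>p\<in>C \<times> C. H (P (fst p)) (fst p))"
    using P_\<phi> \<phi>_cube
    by (intro sum.reindex_bij_witness[where i = \<phi> and j = \<phi>]) (auto simp: \<phi>_def fun_eq_iff)
  also have "\<dots> = 2 ^ n * (\<Sum>x\<in>C. H (P x) x)"
    by (simp add: sum.cartesian_product' C_def card_cube sum_distrib_left)
  finally show ?thesis
    by (simp add: expect_def C_def sum_divide_distrib[symmetric] power2_eq_square field_simps)
qed

section \<open>Certificates and binomial tails\<close>

text \<open>Rankin's trick: the k-th term is weighted by 3 powr (m / 4 - k) \<ge> 1.\<close>

lemma sum_binomial_le_powr:
  fixes m q :: nat
  assumes "4 * q \<le> m"
  shows "real (\<Sum>k<q. m choose k) \<le> 3 powr (m / 4) * (4 / 3) ^ m"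
proof -
  have "real (\<Sum>k<q. m choose k) \<le> (\<Sum>k<q. (m choose k) * (3 powr (m / 4) / 3 ^ k))"
    unfolding of_nat_sum
  proof (rule sum_mono)
    fix k assume "k \<in> {..<q}"
    then have "1 \<le> 3 powr (m / 4 - k)"
      using assms by (simp add: ge_one_powr_ge_zero)
    then have "1 \<le> 3 powr (m / 4) / 3 ^ k"
      by (simp add: powr_diff powr_realpow)
    from mult_left_mono[OF this, of "real (m choose k)"]
    show "real (m choose k) \<le> (m choose k) * (3 powr (m / 4) / 3 ^ k)"
      by simp
  qed
  also have "\<dots> \<le> (\<Sum>k\<le>m. (m choose k) * (3 powr (m / 4) / 3 ^ k))"
    by (rule sum_mono2) (use assms in auto)
  also have "\<dots> = 3 powr (m / 4) * (\<Sum>k\<le>m. (m choose k) * (1 / 3) ^ k * 1 ^ (m - k))"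
    by (simp add: sum_distrib_left field_simps)
  also have "\<dots> = 3 powr (m / 4) * (4 / 3) ^ m"
    using binomial_ring[of "1 / 3 :: real" 1 m] by simp
  finally show ?thesis .
qed

lemma ln_two_ge: "1 / 2 \<le> ln (2 :: real)"
  using ln_le_minus_one[of "1 / 2 :: real"] by (simp add: ln_div)

text \<open>The left-hand side is 2 (3 powr (1/4) * 2/3)^m and ln (3 powr (1/4) * 2/3) \<le> -1/10;
  this is where the constant 20 of the theorem comes from.\<close>

lemma binomial_tail_bound_lt:
  fixes m :: nat and \<epsilon> :: real
  assumes "0 < \<epsilon>" "\<epsilon> \<le> 1 / 2" "20 * ln (1 / \<epsilon>) < m"
  shows "2 * (3 powr (m / 4) * (4 / 3) ^ m) / 2 ^ m < \<epsilon>"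
proof -
  define L where "L = 2 * (3 powr (m / 4) * (4 / 3) ^ m) / 2 ^ m"
  have "ln (16 / 27 :: real) \<le> 16 / 27 - 1"
    by (rule ln_le_minus_one) simp
  moreover have "ln (16 / 27 :: real) = 4 * ln 2 - 3 * ln 3"
    using ln_realpow[of 2 4] ln_realpow[of 3 3] by (simp add: ln_div)
  ultimately have ln_3_2: "1 / 10 \<le> 3 / 4 * ln 3 - ln (2 :: real)"
    by simp
  have "ln L = ln 2 + m / 4 * ln 3 + m * (2 * ln 2 - ln 3) - m * ln 2"
    using ln_realpow[of 2 2] by (simp add: L_def ln_mult ln_div ln_realpow)
  also have "\<dots> = ln 2 - m * (3 / 4 * ln 3 - ln 2)"
    by (simp add: algebra_simps)
  also have "\<dots> \<le> ln 2 - m / 10"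
    using mult_left_mono[OF ln_3_2, of "real m"] by simp
  also have "\<dots> < ln 2 - 2 * ln (1 / \<epsilon>)"
    using assms(3) by simp
  also have "\<dots> \<le> ln \<epsilon>"
  proof -
    have "ln 2 \<le> ln (1 / \<epsilon>)"
      using assms(1,2) by (subst ln_le_cancel_iff) (auto simp: field_simps)
    then show ?thesis
      using assms(1) by (simp add: ln_div)
  qed
  finally have "ln L < ln \<epsilon>" .
  moreover have "0 < L"
    by (simp add: L_def)
  ultimately show ?thesis
    using assms(1) by (simp add: L_def)
qed

lemma binomial_tails_lt:
  assumes "0 < \<epsilon>" "\<epsilon> \<le> 1 / 2" "4 * q < m" "20 * ln (1 / \<epsilon>) < m"
  shows "2 * real (\<Sum>k<q. m choose k) / 2 ^ m < \<epsilon>"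
proof -
  have "2 * real (\<Sum>k<q. m choose k) / 2 ^ m \<le> 2 * (3 powr (m / 4) * (4 / 3) ^ m) / 2 ^ m"
    using sum_binomial_le_powr[of q m] assms(3) by (simp add: divide_right_mono)
  also have "\<dots> < \<epsilon>"
    using binomial_tail_bound_lt[OF assms(1,2,4)] .
  finally show ?thesis .
qed

lemma prob_weight_eq_card_Pow:
  assumes F: "F \<subseteq> {..<n}"
  shows "prob n (\<lambda>z. P (card {i \<in> F. z i})) = card {S \<in> Pow F. P (card S)} / 2 ^ card F"
proof -
  define G where "G = {..<n} - F"
  have "bij_betw (\<lambda>z. ({i \<in> F. z i}, {i \<in> G. z i}))
      {z \<in> cube n. P (card {i \<in> F. z i})} ({S \<in> Pow F. P (card S)} \<times> Pow G)"
  proof (rule bij_betw_byWitness[where f' = "\<lambda>(S, R) i. i \<in> S \<union> R"])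
    have "{i \<in> F. i \<in> S \<union> R} = S" if "S \<subseteq> F" "R \<subseteq> G" for S R
      using that by (auto simp: G_def)
    then show "(\<lambda>(S, R) i. i \<in> S \<union> R) ` ({S \<in> Pow F. P (card S)} \<times> Pow G)
        \<subseteq> {z \<in> cube n. P (card {i \<in> F. z i})}"
      using F by (force simp: mem_cube_iff G_def)
  qed (auto simp: mem_cube_iff G_def fun_eq_iff)
  then have card_eq: "card {z \<in> cube n. P (card {i \<in> F. z i})} = card {S \<in> Pow F. P (card S)} * 2 ^ card G"
    by (simp add: bij_betw_same_card card_cartesian_product card_Pow G_def)
  have "card F + card G = n"
    using F card_mono[OF finite_lessThan F] by (simp add: G_def card_Diff_subset finite_subset)
  then have "(2 :: real) ^ n = 2 ^ card F * 2 ^ card G"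
    by (metis power_add)
  then show ?thesis
    unfolding prob_def card_eq by simp
qed

lemma card_two_tails_le:
  assumes "finite F"
  shows "card {S \<in> Pow F. card S < q \<or> card F < card S + q} \<le> 2 * (\<Sum>k<q. card F choose k)"
proof -
  define A where "A = {S \<in> Pow F. card S < q}"
  have "A = (\<Union>k<q. {S. S \<subseteq> F \<and> card S = k})"
    by (auto simp: A_def)
  then have card_A: "card A \<le> (\<Sum>k<q. card F choose k)"
    using card_UN_le[of "{..<q}" "\<lambda>k. {S. S \<subseteq> F \<and> card S = k}"] n_subsets[OF assms] by simp
  have "{S \<in> Pow F. card F < card S + q} \<subseteq> (\<lambda>T. F - T) ` A"
  proof
    fix S assume "S \<in> {S \<in> Pow F. card F < card S + q}"
    then have S: "S \<subseteq> F" "card F < card S + q"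
      by auto
    moreover have "card (F - S) = card F - card S"
      using S card_Diff_subset[OF finite_subset[OF _ assms]] by blast
    moreover have "card S \<le> card F"
      using S card_mono[OF assms] by blast
    ultimately have "card (F - S) < q"
      by linarith
    then have "F - S \<in> A"
      by (simp add: A_def)
    moreover have "S = F - (F - S)"
      using S by auto
    ultimately show "S \<in> (\<lambda>T. F - T) ` A"
      by blast
  qed
  moreover have "finite A"
    using assms by (simp add: A_def)
  ultimately have "card {S \<in> Pow F. card F < card S + q} \<le> card A"
    by (meson card_image_le card_mono finite_imageI le_trans)
  moreover have "{S \<in> Pow F. card S < q \<or> card F < card S + q} = A \<union> {S \<in> Pow F. card F < card S + q}"
    by (auto simp: A_def)
  ultimately show ?thesis
    using card_A card_Un_le[of A "{S \<in> Pow F. card F < card S + q}"] by simp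
qed

definition certificate :: "nat \<Rightarrow> ((nat \<Rightarrow> bool) \<Rightarrow> bool) \<Rightarrow> (nat \<Rightarrow> bool) \<Rightarrow> nat set \<Rightarrow> bool" where
  "certificate n f x Q \<longleftrightarrow> Q \<subseteq> {..<n} \<and> (\<forall>y\<in>cube n. (\<forall>i\<in>Q. y i = x i) \<longrightarrow> f y = f x)"

lemma card_weight_split:
  "card {i. i < n \<and> w i} = card {i. i < n \<and> \<pi> i \<noteq> None \<and> w i} + card {i \<in> free_coords n \<pi>. w i}"
proof -
  have "{i. i < n \<and> w i} = {i. i < n \<and> \<pi> i \<noteq> None \<and> w i} \<union> {i \<in> free_coords n \<pi>. w i}"
    by (auto simp: free_coords_def)
  then show ?thesis
    by (simp add: card_Un_disjoint free_coords_def disjoint_iff)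
qed

lemma certified_input_with_free_weight:
  assumes x: "x \<in> cube n" and cert: "certificate n f x Q"
    and lo: "card (Q \<inter> free_coords n \<pi>) \<le> w"
    and hi: "w + card (Q \<inter> free_coords n \<pi>) \<le> card (free_coords n \<pi>)"
  obtains y where "y \<in> cube n" "f y = f x" "\<And>i. \<pi> i \<noteq> None \<Longrightarrow> y i = x i"
    "card {i \<in> free_coords n \<pi>. y i} = w"
proof -
  define F where "F = free_coords n \<pi>"
  define P where "P = {i \<in> Q \<inter> F. x i}"
  have fin: "finite F"
    by (simp add: F_def free_coords_def)
  have "card P \<le> card (Q \<inter> F)"
    by (rule card_mono) (use fin in \<open>auto simp: P_def\<close>)
  then have "card P \<le> w"
    using lo by (simp add: F_def)
  moreover have "card (F - Q) = card F - card (Q \<inter> F)"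
    using fin by (metis card_Diff_subset_Int finite_Int inf_commute)
  ultimately have "w - card P \<le> card (F - Q)"
    using hi by (simp add: F_def)
  then obtain W where W: "W \<subseteq> F - Q" "card W = w - card P"
    by (meson obtain_subset_with_card_n)
  define y where "y i = (if \<pi> i \<noteq> None \<or> i \<in> Q then x i else i \<in> W)" for i
  have y: "y \<in> cube n"
    using x W cert by (auto simp: y_def mem_cube_iff F_def free_coords_def certificate_def)
  have "{i \<in> F. y i} = P \<union> W" "P \<inter> W = {}"
    using W by (auto simp: y_def P_def F_def free_coords_def)
  then have "card {i \<in> F. y i} = w"
    using W fin \<open>card P \<le> w\<close> by (simp add: card_Un_disjoint P_def finite_subset)
  moreover have "f y = f x"
    using cert y by (auto simp: certificate_def y_def)
  ultimately show ?thesis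
    using that y by (simp add: F_def y_def)
qed

lemma restrict_fun_eq_at_balanced_weight:
  assumes sym: "symmetric_fun n f" and x: "x \<in> cube n" and z: "z \<in> cube n"
    and dom: "\<forall>i. \<pi> i \<noteq> None \<longrightarrow> i < n" and cons: "\<forall>i b. \<pi> i = Some b \<longrightarrow> b = x i"
    and cert: "certificate n f x Q"
    and lo: "card (Q \<inter> free_coords n \<pi>) \<le> card {i \<in> free_coords n \<pi>. z i}"
    and hi: "card {i \<in> free_coords n \<pi>. z i} + card (Q \<inter> free_coords n \<pi>) \<le> card (free_coords n \<pi>)"
  shows "restrict_fun f \<pi> z = f x"
proof -
  define F where "F = free_coords n \<pi>"
  obtain y where y: "y \<in> cube n" "f y = f x" "\<And>i. \<pi> i \<noteq> None \<Longrightarrow> y i = x i"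
    "card {i \<in> F. y i} = card {i \<in> F. z i}"
    using certified_input_with_free_weight[OF x cert lo hi] by (auto simp: F_def)
  have "card {i. i < n \<and> override \<pi> z i}
      = card {i. i < n \<and> \<pi> i \<noteq> None \<and> override \<pi> z i} + card {i \<in> F. override \<pi> z i}"
    unfolding F_def by (rule card_weight_split)
  also have "{i. i < n \<and> \<pi> i \<noteq> None \<and> override \<pi> z i} = {i. i < n \<and> \<pi> i \<noteq> None \<and> y i}"
    using cons y(3) by (auto simp: override_def split: option.splits)
  also have "{i \<in> F. override \<pi> z i} = {i \<in> F. z i}"
    by (auto simp: override_def F_def free_coords_def)
  also have "card {i. i < n \<and> \<pi> i \<noteq> None \<and> y i} + card {i \<in> F. z i} = card {i. i < n \<and> y i}"
    using card_weight_split[of n y \<pi>] y(4) by (simp add: F_def)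
  finally have "f (override \<pi> z) = f y"
    using sym override_in_cube[OF z dom] y(1) unfolding symmetric_fun_def by blast
  then show ?thesis
    using y(2) by (simp add: restrict_fun_override)
qed

lemma bias_le_binomial_tails:
  assumes sym: "symmetric_fun n f" and x: "x \<in> cube n"
    and dom: "\<forall>i. \<pi> i \<noteq> None \<longrightarrow> i < n" and cons: "\<forall>i b. \<pi> i = Some b \<longrightarrow> b = x i"
    and cert: "certificate n f x Q"
  defines "m \<equiv> card (free_coords n \<pi>)" and "q \<equiv> card (Q \<inter> free_coords n \<pi>)"
  shows "bias n (restrict_fun f \<pi>) \<le> 2 * real (\<Sum>k<q. m choose k) / 2 ^ m"
proof -
  define F where "F = free_coords n \<pi>"
  have "bias n (restrict_fun f \<pi>) \<le> prob n (\<lambda>z. restrict_fun f \<pi> z \<noteq> f x)"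
    by (rule bias_le_prob)
  also have "\<dots> \<le> prob n (\<lambda>z. (\<lambda>w. w < q \<or> m < w + q) (card {i \<in> F. z i}))"
    using restrict_fun_eq_at_balanced_weight[OF sym x _ dom cons cert]
    by (intro prob_mono) (force simp: m_def q_def F_def)
  also have "\<dots> = card {S \<in> Pow F. card S < q \<or> m < card S + q} / 2 ^ m"
    using prob_weight_eq_card_Pow[of F n "\<lambda>w. w < q \<or> m < w + q"]
    by (auto simp: F_def m_def free_coords_def)
  also have "\<dots> \<le> 2 * real (\<Sum>k<q. m choose k) / 2 ^ m"
  proof -
    have "card {S \<in> Pow F. card S < q \<or> m < card S + q} \<le> 2 * (\<Sum>k<q. m choose k)"
      using card_two_tails_le[of F q] by (simp add: F_def m_def free_coords_def)
    from of_nat_mono[OF this, where 'a = real] show ?thesis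
      by (simp add: divide_right_mono)
  qed
  finally show ?thesis .
qed

lemma card_free_le_certificate:
  assumes sym: "symmetric_fun n f" and x: "x \<in> cube n"
    and dom: "\<forall>i. \<pi> i \<noteq> None \<longrightarrow> i < n" and cons: "\<forall>i b. \<pi> i = Some b \<longrightarrow> b = x i"
    and cert: "certificate n f x Q"
    and \<epsilon>: "0 < \<epsilon>" "\<epsilon> \<le> 1 / 2" and bias: "\<epsilon> < bias n (restrict_fun f \<pi>)"
  shows "card (free_coords n \<pi>) \<le> 20 * ln (1 / \<epsilon>) * card (Q \<inter> free_coords n \<pi>)"
proof -
  define m where "m = card (free_coords n \<pi>)"
  define q where "q = card (Q \<inter> free_coords n \<pi>)"
  have tails: "\<epsilon> < 2 * real (\<Sum>k<q. m choose k) / 2 ^ m"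
    using bias bias_le_binomial_tails[OF sym x dom cons cert] by (simp add: m_def q_def)
  have "q \<noteq> 0"
    using tails \<epsilon> by (cases q) auto
  have "ln 2 \<le> ln (1 / \<epsilon>)"
    using \<epsilon> by (subst ln_le_cancel_iff) (auto simp: field_simps)
  then have ln: "1 / 2 \<le> ln (1 / \<epsilon>)"
    using ln_two_ge by linarith
  consider "m \<le> 4 * q" | "m \<le> 20 * ln (1 / \<epsilon>)" | "4 * q < m" "20 * ln (1 / \<epsilon>) < m"
    by linarith
  then show ?thesis
  proof cases
    case 1
    then have "real m \<le> 4 * real q"
      by simp
    also have "\<dots> \<le> 20 * ln (1 / \<epsilon>) * q"
      using ln by (intro mult_right_mono) auto
    finally show ?thesis
      by (simp add: m_def q_def)
  next
    case 2
    also have "20 * ln (1 / \<epsilon>) \<le> 20 * ln (1 / \<epsilon>) * q"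
      using ln \<open>q \<noteq> 0\<close> by (intro mult_le_cancel_left1[THEN iffD2]) auto
    finally show ?thesis
      by (simp add: m_def q_def)
  next
    case 3
    then show ?thesis
      using binomial_tails_lt[OF \<epsilon> 3] tails by linarith
  qed
qed

section \<open>Double counting\<close>

lemma card_multiples_below_le:
  fixes \<beta> a :: real and N :: nat
  assumes "0 < \<beta>" "0 \<le> a"
  shows "\<beta> * card {l \<in> {1..N}. \<beta> * l < a} \<le> a"
proof (cases "{l \<in> {1..N}. \<beta> * l < a} = {}")
  case False
  define S where "S = {l \<in> {1..N}. \<beta> * l < a}"
  have "finite S"
    by (simp add: S_def)
  moreover have "S \<noteq> {}" "\<forall>l\<in>S. 1 \<le> l \<and> \<beta> * l < a"
    using False by (auto simp: S_def)
  ultimately have "\<beta> * Max S < a" "S \<subseteq> {1..Max S}"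
    by (auto intro: Max_ge)
  moreover have "\<beta> * card S \<le> \<beta> * Max S"
    using assms(1) card_mono[OF _ calculation(2)] by simp
  ultimately show ?thesis
    unfolding S_def by linarith
next
  case True
  then show ?thesis
    using assms(2) by (simp only: card.empty of_nat_0 mult_zero_right)
qed

lemma sum_card_swap:
  assumes "finite A" "finite B"
  shows "(\<Sum>a\<in>A. card {b \<in> B. R a b}) = (\<Sum>b\<in>B. card {a \<in> A. R a b})"
proof -
  have "(\<Sum>a\<in>A. card {b \<in> B. R a b}) = (\<Sum>a\<in>A. \<Sum>b\<in>B. if R a b then 1 else 0)"
    using assms by (simp add: sum.If_cases Int_def)
  also have "\<dots> = (\<Sum>b\<in>B. \<Sum>a\<in>A. if R a b then 1 else 0)"
    by (rule sum.swap)
  also have "\<dots> = (\<Sum>b\<in>B. card {a \<in> A. R a b})"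
    using assms by (simp add: sum.If_cases Int_def)
  finally show ?thesis .
qed

lemma card_eq_sum_fibres:
  fixes g :: "'a \<Rightarrow> nat"
  assumes "finite S" "\<forall>s\<in>S. g s \<le> N"
  shows "card S = card {s \<in> S. g s = 0} + (\<Sum>l=1..N. card {s \<in> S. g s = l})"
proof -
  have "(\<Sum>l\<le>N. \<Sum>s\<in>{s \<in> S. g s = l}. 1 :: nat) = (\<Sum>s\<in>S. 1)"
    by (rule sum.group) (use assms in auto)
  then have "card S = (\<Sum>l\<le>N. card {s \<in> S. g s = l})"
    by simp
  also have "{..N} = insert 0 {1..N}"
    by auto
  finally show ?thesis
    by simp
qed

section \<open>Decision trees\<close>

lemma dt_queried_subset_vars: "dt_queried t x \<subseteq> dt_vars t"
  by (induction t) auto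

lemma dt_eval_agree: "(\<forall>i\<in>dt_queried t x. y i = x i) \<Longrightarrow> dt_eval t y = dt_eval t x"
  by (induction t) auto

lemma zero_error_tree_certificate:
  assumes "dt_vars t \<subseteq> {..<n}" "\<forall>x\<in>cube n. dt_eval t x = f x" "x \<in> cube n"
  shows "certificate n f x (dt_queried t x)"
  using assms dt_queried_subset_vars dt_eval_agree unfolding certificate_def by (metis subset_trans)

fun query_all :: "((nat \<Rightarrow> bool) \<Rightarrow> bool) \<Rightarrow> nat list \<Rightarrow> (nat \<Rightarrow> bool) \<Rightarrow> dtree" where
  "query_all f [] \<rho> = Leaf (f \<rho>)"
| "query_all f (i # is) \<rho> = Query i (query_all f is (\<rho>(i := False))) (query_all f is (\<rho>(i := True)))"

lemma dt_eval_query_all: "dt_eval (query_all f is \<rho>) x = f (\<lambda>j. if j \<in> set is then x j else \<rho> j)"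
proof (induction "is" arbitrary: \<rho>)
  case (Cons i "is")
  have "dt_eval (query_all f (i # is) \<rho>) x = dt_eval (query_all f is (\<rho>(i := x i))) x"
    by (cases "x i") simp_all
  also have "\<dots> = f (\<lambda>j. if j \<in> set is then x j else (\<rho>(i := x i)) j)"
    by (rule Cons.IH)
  also have "(\<lambda>j. if j \<in> set is then x j else (\<rho>(i := x i)) j) = (\<lambda>j. if j \<in> set (i # is) then x j else \<rho> j)"
    by (auto simp: fun_eq_iff)
  finally show ?case .
qed simp

lemma dt_vars_query_all: "dt_vars (query_all f is \<rho>) \<subseteq> set is"
  by (induction "is" arbitrary: \<rho>) auto

lemma exists_zero_error_tree: "\<exists>t. dt_vars t \<subseteq> {..<n} \<and> (\<forall>x\<in>cube n. dt_eval t x = f x)"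
proof (intro exI conjI ballI)
  show "dt_vars (query_all f [0..<n] (\<lambda>_. False)) \<subseteq> {..<n}"
    using dt_vars_query_all[of f "[0..<n]" "\<lambda>_. False"] by (simp add: atLeast0LessThan)
  show "dt_eval (query_all f [0..<n] (\<lambda>_. False)) x = f x" if "x \<in> cube n" for x
  proof -
    have "(\<lambda>j. if j \<in> set [0..<n] then x j else False) = x"
      using that by (auto simp: mem_cube_iff fun_eq_iff)
    then show ?thesis
      by (simp add: dt_eval_query_all)
  qed
qed

lemma expect_le_opt_avg0:
  assumes "0 < K"
    and bound: "\<And>t x. dt_vars t \<subseteq> {..<n} \<Longrightarrow> \<forall>x\<in>cube n. dt_eval t x = f x \<Longrightarrow> x \<in> cube n \<Longrightarrow>
      g x \<le> A + K * (\<Sum>i\<in>dt_queried t x. c i)"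
  shows "expect n g \<le> A + opt_avg0 n f c * K"
proof -
  define S where "S = {expect n (\<lambda>x. \<Sum>i\<in>dt_queried t x. c i) | t.
       dt_vars t \<subseteq> {..<n} \<and> (\<forall>x\<in>cube n. dt_eval t x = f x)}"
  have "(expect n g - A) / K \<le> s" if "s \<in> S" for s
  proof -
    obtain t where t: "s = expect n (\<lambda>x. \<Sum>i\<in>dt_queried t x. c i)" "dt_vars t \<subseteq> {..<n}"
      "\<forall>x\<in>cube n. dt_eval t x = f x"
      using \<open>s \<in> S\<close> by (auto simp: S_def)
    have "expect n g \<le> expect n (\<lambda>x. A + K * (\<Sum>i\<in>dt_queried t x. c i))"
      using bound[OF t(2,3)] by (rule expect_mono)
    also have "\<dots> = A + K * s"
      by (simp add: expect_add expect_cmult t(1))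
    finally show ?thesis
      using assms(1) by (simp add: field_simps)
  qed
  moreover have "S \<noteq> {}"
    using exists_zero_error_tree[of n f] by (auto simp: S_def)
  ultimately have "(expect n g - A) / K \<le> opt_avg0 n f c"
    unfolding opt_avg0_def S_def[symmetric] by (rule cInf_greatest[rotated])
  then show ?thesis
    using assms(1) by (simp add: field_simps)
qed

section \<open>The run of Warmup-IPRR\<close>

locale warmup_iprr =
  fixes n :: nat and f :: "(nat \<Rightarrow> bool) \<Rightarrow> bool" and c :: "nat \<Rightarrow> real"
    and \<epsilon> \<beta> :: real and sel :: "(nat \<Rightarrow> real) \<Rightarrow> (nat \<rightharpoonup> bool) \<Rightarrow> nat"
  assumes symmetric: "symmetric_fun n f" and cost_nonneg: "\<forall>i<n. 0 \<le> c i"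
    and \<epsilon>_pos: "0 < \<epsilon>" and \<epsilon>_le: "\<epsilon> \<le> 1 / 2" and \<beta>_pos: "0 < \<beta>"
    and valid: "valid_selection n f \<epsilon> sel"
begin

text \<open>iprr_state iterates the loop body regardless of the loop condition, so
  \<open>theta x t\<close> and \<open>revealed x t\<close> are defined for every t; \<open>running x t\<close> says that the first
  t iterations are actually executed.\<close>

abbreviation theta :: "(nat \<Rightarrow> bool) \<Rightarrow> nat \<Rightarrow> nat \<Rightarrow> real" where
  "theta x t \<equiv> fst (iprr_state c \<beta> sel x t)"

abbreviation revealed :: "(nat \<Rightarrow> bool) \<Rightarrow> nat \<Rightarrow> nat \<rightharpoonup> bool" where
  "revealed x t \<equiv> snd (iprr_state c \<beta> sel x t)"

abbreviation halt_time :: "(nat \<Rightarrow> bool) \<Rightarrow> nat" where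
  "halt_time x \<equiv> iprr_time n f \<epsilon> c \<beta> sel x"

definition chosen :: "(nat \<Rightarrow> bool) \<Rightarrow> nat \<Rightarrow> nat" where
  "chosen x t = sel (theta x t) (revealed x t)"

definition visits :: "(nat \<Rightarrow> bool) \<Rightarrow> nat \<Rightarrow> nat \<Rightarrow> nat" where
  "visits x t i = card {k. k < t \<and> chosen x k = i}"

definition running :: "(nat \<Rightarrow> bool) \<Rightarrow> nat \<Rightarrow> bool" where
  "running x t \<longleftrightarrow> (\<forall>k<t. \<epsilon> < bias n (restrict_fun f (revealed x k)))"

lemma state_0: "iprr_state c \<beta> sel x 0 = (\<lambda>_. 0, Map.empty)"
  by (simp add: iprr_state_def)

lemma state_Suc: "iprr_state c \<beta> sel x (Suc t) = iprr_step c \<beta> sel x (iprr_state c \<beta> sel x t)"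
  by (simp add: iprr_state_def)

lemma theta_Suc: "theta x (Suc t) = (theta x t)(chosen x t := theta x t (chosen x t) + \<beta>)"
  by (simp add: state_Suc iprr_step_def Let_def chosen_def)

lemma revealed_Suc:
  "revealed x (Suc t) = (if c (chosen x t) \<le> theta x t (chosen x t) + \<beta>
     then (revealed x t)(chosen x t \<mapsto> x (chosen x t)) else revealed x t)"
  by (simp add: state_Suc iprr_step_def Let_def chosen_def)

lemma visits_0: "visits x 0 i = 0"
  by (simp add: visits_def)

lemma visits_Suc: "visits x (Suc t) i = visits x t i + (if chosen x t = i then 1 else 0)"
proof -
  have "{k. k < Suc t \<and> chosen x k = i}
      = (if chosen x t = i then insert t else id) {k. k < t \<and> chosen x k = i}"
    by (auto simp: less_Suc_eq)
  then show ?thesis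
    by (simp add: visits_def)
qed

lemma theta_eq_visits: "theta x t i = \<beta> * visits x t i"
  by (induction t arbitrary: i) (simp_all add: state_0 visits_0 theta_Suc visits_Suc algebra_simps)

lemma theta_nonneg: "0 \<le> theta x t i"
  using \<beta>_pos by (simp add: theta_eq_visits)

lemma revealed_consistent: "revealed x t i = Some b \<Longrightarrow> b = x i"
  by (induction t) (auto simp: state_0 revealed_Suc split: if_splits)

lemma revealed_mono: "t \<le> t' \<Longrightarrow> revealed x t i \<noteq> None \<Longrightarrow> revealed x t' i \<noteq> None"
  by (induction t' rule: dec_induct) (auto simp: revealed_Suc)

lemma revealed_imp_chosen: "revealed x t i \<noteq> None \<Longrightarrow> \<exists>k<t. chosen x k = i"
  by (induction t) (auto simp: state_0 revealed_Suc less_Suc_eq split: if_splits)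

lemma free_theta_lt_cost: "revealed x t i = None \<Longrightarrow> 0 < theta x t i \<Longrightarrow> theta x t i < c i"
  by (induction t) (auto simp: state_0 theta_Suc revealed_Suc split: if_splits)

lemma chosen_min_free:
  assumes "running x (Suc t)"
  shows "chosen x t \<in> free_coords n (revealed x t)"
    and "\<forall>j\<in>free_coords n (revealed x t). theta x t (chosen x t) \<le> theta x t j"
proof -
  have "chosen x t \<in> free_coords n (revealed x t) \<and>
      (\<forall>j\<in>free_coords n (revealed x t). theta x t (chosen x t) \<le> theta x t j)"
    using assms
  proof (induction t rule: less_induct)
    case (less t)
    have "chosen x k < n" if "k < t" for k
      using less.IH[OF that] less.prems that by (auto simp: running_def free_coords_def)
    then have "\<forall>i. revealed x t i \<noteq> None \<longrightarrow> i < n"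
      using revealed_imp_chosen by blast
    moreover have "\<epsilon> < bias n (restrict_fun f (revealed x t))"
      using less.prems by (simp add: running_def)
    ultimately show ?case
      using valid_selection_min_free[OF symmetric valid] \<epsilon>_pos theta_nonneg
      by (simp add: chosen_def less_imp_le)
  qed
  then show "chosen x t \<in> free_coords n (revealed x t)"
    and "\<forall>j\<in>free_coords n (revealed x t). theta x t (chosen x t) \<le> theta x t j"
    by blast+
qed

lemma running_mono: "running x t \<Longrightarrow> k \<le> t \<Longrightarrow> running x k"
  by (simp add: running_def)

lemma chosen_less: "running x t \<Longrightarrow> k < t \<Longrightarrow> chosen x k < n"
  using chosen_min_free(1)[of x k] by (simp add: running_mono free_coords_def)

lemma revealed_less: "running x t \<Longrightarrow> revealed x t i \<noteq> None \<Longrightarrow> i < n"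
  using revealed_imp_chosen chosen_less by blast

lemma theta_le_cost: "running x t \<Longrightarrow> i < n \<Longrightarrow> theta x t i \<le> c i + \<beta>"
proof (induction t)
  case 0
  then show ?case
    using cost_nonneg \<beta>_pos by (simp add: state_0)
next
  case (Suc t)
  have "theta x t (chosen x t) \<le> c (chosen x t)"
    using chosen_min_free(1)[OF Suc.prems(1)] free_theta_lt_cost[of x t "chosen x t"] cost_nonneg
      theta_nonneg[of x t "chosen x t"]
    by (fastforce simp: free_coords_def)
  then show ?case
    using Suc by (simp add: theta_Suc running_def)
qed

lemma sum_visits: "running x t \<Longrightarrow> (\<Sum>i<n. visits x t i) = t"
  unfolding visits_def card_eq_sum
  using sum.group[of "{..<t}" "{..<n}" "chosen x" "\<lambda>_. 1 :: nat"] chosen_less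
  by (auto simp: Collect_conj_eq Int_commute lessThan_def)

lemma sum_theta: "running x t \<Longrightarrow> (\<Sum>i<n. theta x t i) = \<beta> * t"
  using arg_cong[OF sum_visits, of x t real]
  by (simp add: theta_eq_visits sum_distrib_left[symmetric])

lemma halts: "iprr_halts n f \<epsilon> c \<beta> sel x"
proof (rule ccontr)
  assume "\<not> iprr_halts n f \<epsilon> c \<beta> sel x"
  then have running: "running x t" for t
    by (auto simp: iprr_halts_def iprr_stop_def running_def not_le)
  obtain t :: nat where t: "(\<Sum>i<n. c i + \<beta>) < \<beta> * t"
    using reals_Archimedean3[OF \<beta>_pos] by (metis mult.commute)
  have "\<beta> * t = (\<Sum>i<n. theta x t i)"
    using sum_theta[OF running] by simp
  also have "\<dots> \<le> (\<Sum>i<n. c i + \<beta>)"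
    using theta_le_cost[OF running] by (intro sum_mono) simp
  finally show False
    using t by simp
qed

lemma halt_time_stop: "bias n (restrict_fun f (revealed x (halt_time x))) \<le> \<epsilon>"
  using LeastI_ex[OF halts[unfolded iprr_halts_def]] by (simp add: iprr_time_def iprr_stop_def)

lemma running_halt_time: "running x (halt_time x)"
  using not_less_Least[of _ "iprr_stop n f \<epsilon> c \<beta> sel x"]
  by (auto simp: running_def iprr_time_def iprr_stop_def not_le)

lemma cost_eq: "iprr_cost n f \<epsilon> c \<beta> sel x = \<beta> * halt_time x"
  using sum_theta[OF running_halt_time] by (simp add: iprr_cost_def iprr_final_def)

lemma state_agree:
  assumes agree: "\<And>i. revealed x (halt_time x) i \<noteq> None \<Longrightarrow> y i = x i"
  shows "t \<le> halt_time x \<Longrightarrow> iprr_state c \<beta> sel y t = iprr_state c \<beta> sel x t"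
proof (induction t)
  case (Suc t)
  then have IH: "iprr_state c \<beta> sel y t = iprr_state c \<beta> sel x t"
    by simp
  then have same_choice: "chosen y t = chosen x t"
    by (simp add: chosen_def)
  have "y (chosen x t) = x (chosen x t)" if "c (chosen x t) \<le> theta x t (chosen x t) + \<beta>"
    using that revealed_mono[OF Suc.prems, of x "chosen x t"] agree by (simp add: revealed_Suc)
  then show ?case
    using IH same_choice by (simp add: state_Suc iprr_step_def Let_def chosen_def)
qed (simp add: state_0)

lemma revealed_halt_time_agree:
  assumes agree: "\<And>i. revealed x (halt_time x) i \<noteq> None \<Longrightarrow> y i = x i"
  shows "revealed y (halt_time y) = revealed x (halt_time x)"
proof -
  have same_stop: "iprr_stop n f \<epsilon> c \<beta> sel y k = iprr_stop n f \<epsilon> c \<beta> sel x k"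
    if "k \<le> halt_time x" for k
    using state_agree[OF agree that] by (simp add: iprr_stop_def)
  have "halt_time y = halt_time x"
    unfolding iprr_time_def[of _ _ _ _ _ _ y]
  proof (rule Least_equality)
    show "iprr_stop n f \<epsilon> c \<beta> sel y (halt_time x)"
      using same_stop halt_time_stop by (simp add: iprr_stop_def)
    show "halt_time x \<le> k" if "iprr_stop n f \<epsilon> c \<beta> sel y k" for k
    proof (rule ccontr)
      assume "\<not> halt_time x \<le> k"
      then have "\<epsilon> < bias n (restrict_fun f (revealed x k))"
        using running_halt_time[of x] by (simp add: running_def)
      then show False
        using that same_stop[of k] \<open>\<not> halt_time x \<le> k\<close> by (simp add: iprr_stop_def)
    qed
  qed
  then show ?thesis
    using state_agree[OF agree] by simp
qed

lemma output_eq_majority: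
  "iprr_output n f \<epsilon> c \<beta> sel x \<longleftrightarrow> majority n (restrict_fun f (revealed x (halt_time x)))"
  by (simp add: iprr_output_def iprr_final_def majority_def)

lemma error_le: "prob n (\<lambda>x. iprr_output n f \<epsilon> c \<beta> sel x \<noteq> f x) \<le> \<epsilon>"
proof -
  define P where "P x = revealed x (halt_time x)" for x
  define H where "H \<pi> y = (if majority n (restrict_fun f \<pi>) \<noteq> f y then 1 else 0 :: real)" for \<pi> y
  have "prob n (\<lambda>x. iprr_output n f \<epsilon> c \<beta> sel x \<noteq> f x) = expect n (\<lambda>x. H (P x) x)"
    by (simp add: prob_eq_expect output_eq_majority H_def P_def)
  also have "\<dots> = expect n (\<lambda>x. expect n (\<lambda>z. H (P x) (override (P x) z)))"
  proof (rule expect_by_revealed)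
    show "b = x i" if "P x i = Some b" for x i b
      using that unfolding P_def by (rule revealed_consistent)
    show "P y = P x" if "\<And>i. P x i \<noteq> None \<Longrightarrow> y i = x i" for x y
      using that unfolding P_def by (rule revealed_halt_time_agree)
  qed
  also have "\<dots> = expect n (\<lambda>x. bias n (restrict_fun f (P x)))"
  proof -
    have "expect n (\<lambda>z. H \<pi> (override \<pi> z)) = prob n (\<lambda>z. restrict_fun f \<pi> z \<noteq> majority n (restrict_fun f \<pi>))"
      for \<pi>
      unfolding prob_eq_expect H_def restrict_fun_override
      by (rule arg_cong[where f = "expect n"]) (auto simp: fun_eq_iff)
    then show ?thesis
      by (simp only: prob_ne_majority)
  qed
  also have "\<dots> \<le> \<epsilon>"
    using expect_mono[of n _ "\<lambda>_. \<epsilon>"] halt_time_stop by (simp add: P_def)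
  finally show ?thesis .
qed

definition level :: "(nat \<Rightarrow> bool) \<Rightarrow> nat \<Rightarrow> nat" where
  "level x t = visits x t (chosen x t)"

lemma theta_chosen: "theta x t (chosen x t) = \<beta> * level x t"
  by (simp add: theta_eq_visits level_def)

lemma level_le: "level x t \<le> t"
proof -
  have "{k. k < t \<and> chosen x k = chosen x t} \<subseteq> {..<t}"
    by auto
  then show ?thesis
    unfolding level_def visits_def by (metis card_lessThan card_mono finite_lessThan)
qed

lemma visits_less:
  assumes "t1 < t2"
  shows "visits x t1 (chosen x t1) < visits x t2 (chosen x t1)"
proof -
  have "{k. k < t1 \<and> chosen x k = chosen x t1} \<subseteq> {k. k < t2 \<and> chosen x k = chosen x t1}"
    "t1 \<in> {k. k < t2 \<and> chosen x k = chosen x t1} - {k. k < t1 \<and> chosen x k = chosen x t1}"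
    using assms by auto
  then show ?thesis
    unfolding visits_def by (intro psubset_card_mono) auto
qed

lemma inj_on_chosen_level: "inj_on (chosen x) {t. level x t = l}"
proof (rule inj_onI)
  fix t1 t2 assume "t1 \<in> {t. level x t = l}" "t2 \<in> {t. level x t = l}" "chosen x t1 = chosen x t2"
  then have "visits x t1 (chosen x t1) = visits x t2 (chosen x t1)"
    "visits x t2 (chosen x t2) = visits x t1 (chosen x t2)"
    by (simp_all add: level_def)
  then show "t1 = t2"
    using visits_less[of t1 t2 x] visits_less[of t2 t1 x] by (metis less_irrefl linorder_neqE_nat)
qed

lemma chosen_free_later:
  assumes "t0 \<le> t" "t < halt_time x"
  shows "chosen x t \<in> free_coords n (revealed x t0)"
proof -
  have "running x (Suc t)"
    using running_halt_time assms(2) by (auto simp: running_def)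
  then have "chosen x t < n" "revealed x t (chosen x t) = None"
    using chosen_min_free(1) by (simp_all add: free_coords_def)
  then show ?thesis
    using revealed_mono[OF assms(1), of x "chosen x t"]
    by (cases "revealed x t0 (chosen x t)") (auto simp: free_coords_def)
qed

lemma card_level_le_free:
  assumes "{t. t < halt_time x \<and> level x t = l} \<noteq> {}"
  obtains t0 where "t0 < halt_time x" "level x t0 = l"
    "card {t. t < halt_time x \<and> level x t = l} \<le> card (free_coords n (revealed x t0))"
proof -
  define L where "L = {t. t < halt_time x \<and> level x t = l}"
  define t0 where "t0 = Min L"
  have "finite L"
    by (simp add: L_def)
  then have t0: "t0 \<in> L" "\<forall>t\<in>L. t0 \<le> t"
    using assms by (simp_all add: t0_def L_def[symmetric])
  have "inj_on (chosen x) L"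
    by (rule inj_on_subset[OF inj_on_chosen_level[of x l]]) (auto simp: L_def)
  moreover have "chosen x ` L \<subseteq> free_coords n (revealed x t0)"
    using t0(2) chosen_free_later by (auto simp: L_def)
  ultimately have "card L \<le> card (free_coords n (revealed x t0))"
    by (rule card_inj_on_le) (simp add: free_coords_def)
  with t0(1) show ?thesis
    by (intro that[of t0]) (simp_all add: L_def)
qed

lemma level_below_free_cost:
  assumes "t < halt_time x" "0 < level x t" "j \<in> free_coords n (revealed x t)"
  shows "\<beta> * level x t < c j"
proof -
  have "running x (Suc t)"
    using running_halt_time assms(1) by (auto simp: running_def)
  then have "\<beta> * level x t \<le> theta x t j"
    using chosen_min_free(2) assms(3) by (simp add: theta_chosen)
  moreover have "0 < \<beta> * level x t"
    using \<beta>_pos assms(2) by simp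
  ultimately show ?thesis
    using free_theta_lt_cost[of x t j] assms(3) by (simp add: free_coords_def)
qed

lemma card_level_0_le: "card {t. t < halt_time x \<and> level x t = 0} \<le> n"
proof (cases "{t. t < halt_time x \<and> level x t = 0} = {}")
  case False
  then obtain t0 where "card {t. t < halt_time x \<and> level x t = 0} \<le> card (free_coords n (revealed x t0))"
    by (rule card_level_le_free)
  also have "\<dots> \<le> n"
    using card_mono[of "{..<n}" "free_coords n (revealed x t0)"] by (auto simp: free_coords_def)
  finally show ?thesis .
next
  case True
  then show ?thesis
    by (simp only: card.empty le0)
qed

lemma card_level_le_certificate:
  assumes x: "x \<in> cube n" and cert: "certificate n f x Q" and "0 < l"
  shows "card {t. t < halt_time x \<and> level x t = l} \<le> 20 * ln (1 / \<epsilon>) * card {j \<in> Q. \<beta> * l < c j}"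
proof (cases "{t. t < halt_time x \<and> level x t = l} = {}")
  case True
  then show ?thesis
    using \<epsilon>_pos \<epsilon>_le by (simp only: card.empty) simp
next
  case False
  then obtain t0 where t0: "t0 < halt_time x" "level x t0 = l"
    and card_le: "card {t. t < halt_time x \<and> level x t = l} \<le> card (free_coords n (revealed x t0))"
    by (rule card_level_le_free)
  have running: "running x (Suc t0)"
    using running_halt_time t0(1) by (auto simp: running_def)
  then have "running x t0"
    by (simp add: running_def)
  then have dom: "\<forall>i. revealed x t0 i \<noteq> None \<longrightarrow> i < n"
    using revealed_less by blast
  have bias: "\<epsilon> < bias n (restrict_fun f (revealed x t0))"
    using running by (simp add: running_def)
  have "Q \<inter> free_coords n (revealed x t0) \<subseteq> {j \<in> Q. \<beta> * l < c j}"
    using level_below_free_cost[OF t0(1)] t0(2) \<open>0 < l\<close> by auto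
  then have "card (Q \<inter> free_coords n (revealed x t0)) \<le> card {j \<in> Q. \<beta> * l < c j}"
    using cert by (intro card_mono) (auto simp: certificate_def finite_subset)
  moreover have "card (free_coords n (revealed x t0))
      \<le> 20 * ln (1 / \<epsilon>) * card (Q \<inter> free_coords n (revealed x t0))"
    using revealed_consistent
    by (intro card_free_le_certificate[OF symmetric x dom _ cert \<epsilon>_pos \<epsilon>_le bias]) blast
  moreover have "0 \<le> ln (1 / \<epsilon>)"
    using \<epsilon>_pos \<epsilon>_le by simp
  ultimately show ?thesis
    using card_le by (smt (verit) mult_left_mono of_nat_mono)
qed

lemma halt_time_eq_sum_levels:
  "real (halt_time x) = card {t. t < halt_time x \<and> level x t = 0}
     + (\<Sum>l=1..halt_time x. real (card {t. t < halt_time x \<and> level x t = l}))"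
proof -
  have "card {t. t < halt_time x} = card {t \<in> {t. t < halt_time x}. level x t = 0}
      + (\<Sum>l=1..halt_time x. card {t \<in> {t. t < halt_time x}. level x t = l})"
    by (intro card_eq_sum_fibres) (auto intro: order_trans[OF level_le] less_imp_le)
  then show ?thesis
    by (simp only: card_Collect_less_nat mem_Collect_eq flip: of_nat_add of_nat_sum)
qed

lemma halt_time_le_certificate:
  assumes x: "x \<in> cube n" and cert: "certificate n f x Q"
  shows "\<beta> * halt_time x \<le> \<beta> * n + 20 * ln (1 / \<epsilon>) * (\<Sum>j\<in>Q. c j)"
proof -
  define K where "K = 20 * ln (1 / \<epsilon>)"
  define T where "T = halt_time x"
  have K: "0 \<le> K"
    using \<epsilon>_pos \<epsilon>_le by (simp add: K_def)
  have Q: "finite Q" "\<forall>j\<in>Q. 0 \<le> c j"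
    using cert cost_nonneg by (auto simp: certificate_def finite_subset)
  have "real T = real (card {t. t < T \<and> level x t = 0}) + (\<Sum>l=1..T. real (card {t. t < T \<and> level x t = l}))"
    unfolding T_def by (rule halt_time_eq_sum_levels)
  also have "\<dots> \<le> n + (\<Sum>l=1..T. K * card {j \<in> Q. \<beta> * l < c j})"
    using card_level_0_le[of x] card_level_le_certificate[OF x cert]
    by (intro add_mono sum_mono) (auto simp: T_def K_def)
  also have "\<dots> = n + K * (\<Sum>j\<in>Q. card {l \<in> {1..T}. \<beta> * l < c j})"
    using arg_cong[OF sum_card_swap[OF finite_atLeastAtMost[of 1 T] Q(1), of "\<lambda>l j. \<beta> * l < c j"], of real]
    by (simp add: sum_distrib_left[symmetric])
  finally have "\<beta> * T \<le> \<beta> * (n + K * (\<Sum>j\<in>Q. card {l \<in> {1..T}. \<beta> * l < c j}))"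
    using \<beta>_pos by (simp only: mult_le_cancel_left_pos)
  also have "\<dots> = \<beta> * n + K * (\<Sum>j\<in>Q. \<beta> * card {l \<in> {1..T}. \<beta> * l < c j})"
    by (simp add: distrib_left sum_distrib_left mult.left_commute)
  also have "\<dots> \<le> \<beta> * n + K * (\<Sum>j\<in>Q. c j)"
    using card_multiples_below_le[OF \<beta>_pos] Q(2) K by (intro add_left_mono mult_left_mono sum_mono) auto
  finally show ?thesis
    by (simp add: T_def K_def)
qed

lemma expected_cost_le:
  "expect n (iprr_cost n f \<epsilon> c \<beta> sel) \<le> \<beta> * n + opt_avg0 n f c * (20 * ln (1 / \<epsilon>))"
proof (rule expect_le_opt_avg0)
  show "0 < 20 * ln (1 / \<epsilon>)"
    using \<epsilon>_pos \<epsilon>_le by simp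
  show "iprr_cost n f \<epsilon> c \<beta> sel x \<le> \<beta> * n + 20 * ln (1 / \<epsilon>) * (\<Sum>i\<in>dt_queried t x. c i)"
    if "dt_vars t \<subseteq> {..<n}" "\<forall>x\<in>cube n. dt_eval t x = f x" "x \<in> cube n" for t x
    using halt_time_le_certificate[OF that(3) zero_error_tree_certificate[OF that]]
    by (simp add: cost_eq)
qed

end

theorem mainTheorem6:
  "\<exists>C>0. \<forall>(n::nat) (f::(nat \<Rightarrow> bool) \<Rightarrow> bool) (c::nat \<Rightarrow> real) (\<epsilon>::real) (\<beta>::real) sel.
     symmetric_fun n f \<and> (\<forall>i<n. 0 \<le> c i) \<and> 0 < \<epsilon> \<and> \<epsilon> \<le> 1/2 \<and> 0 < \<beta> \<and>
     valid_selection n f \<epsilon> sel \<longrightarrow>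
       (\<forall>x\<in>cube n. iprr_halts n f \<epsilon> c \<beta> sel x) \<and>
       prob n (\<lambda>x. iprr_output n f \<epsilon> c \<beta> sel x \<noteq> f x) \<le> \<epsilon> \<and>
       expect n (iprr_cost n f \<epsilon> c \<beta> sel)
         \<le> \<beta> * real n + opt_avg0 n f c * (C * ln (1 / \<epsilon>))"
proof (rule exI[of _ 20], intro conjI allI impI)
  fix n :: nat and f :: "(nat \<Rightarrow> bool) \<Rightarrow> bool" and c :: "nat \<Rightarrow> real" and \<epsilon> \<beta> :: real
    and sel :: "(nat \<Rightarrow> real) \<Rightarrow> (nat \<rightharpoonup> bool) \<Rightarrow> nat"
  assume "symmetric_fun n f \<and> (\<forall>i<n. 0 \<le> c i) \<and> 0 < \<epsilon> \<and> \<epsilon> \<le> 1/2 \<and> 0 < \<beta> \<and>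
    valid_selection n f \<epsilon> sel"
  then interpret warmup_iprr n f c \<epsilon> \<beta> sel
    by unfold_locales auto
  show "\<forall>x\<in>cube n. iprr_halts n f \<epsilon> c \<beta> sel x"
    using halts by blast
  show "prob n (\<lambda>x. iprr_output n f \<epsilon> c \<beta> sel x \<noteq> f x) \<le> \<epsilon>"
    by (rule error_le)
  show "expect n (iprr_cost n f \<epsilon> c \<beta> sel) \<le> \<beta> * n + opt_avg0 n f c * (20 * ln (1 / \<epsilon>))"
    by (rule expected_cost_le)
qed simp

end
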